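(* For every $Z\in\mathfrak m$, the endomorphisms $\mathrm{ad}_{JZ}^2$ and $\mathrm{ad}_Z^2$ of $\mathfrak m$ commute.
   Context: $\mathfrak g$ is a complex simple Lie algebra with a decomposition $\mathfrak g=\mathfrak k\oplus\mathfrak m$ into the $\pm1$-eigenspaces of an involutive automorphism, arising from an irreducible Hermitian symmetric space: there is $\Upsilon$ in the center of $\mathfrak k$ such that $\mathrm{ad}_\Upsilon$ has eigenvalues $\pm i$ on $\mathfrak m$, with eigenspaces $\mathfrak m^\pm$ (so $[\mathfrak k,\mathfrak m^\pm]\subseteq\mathfrak m^\pm$, $[\mathfrak m^+,\mathfrak m^+]=[\mathfrak m^-,\mathfrak m^-]=0$, $[\mathfrak m,\mathfrak m]\subseteq\mathfrak k$). $J=\mathrm{ad}_\Upsilon|_{\mathfrak m}$. Note $\mathrm{ad}_Z^2$ maps $\mathfrak m$ into $\mathfrak m$ for $Z\in\mathfrak m$. *)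

theory Defs
  imports Complex_Main
begin

definition complex_lie_algebra ::
  "(complex \<Rightarrow> 'g::ab_group_add \<Rightarrow> 'g) \<Rightarrow> ('g \<Rightarrow> 'g \<Rightarrow> 'g) \<Rightarrow> bool" where
  "complex_lie_algebra sc br \<longleftrightarrow>
     vector_space sc \<and>
     (\<forall>x. Vector_Spaces.linear sc sc (br x)) \<and>
     (\<forall>y. Vector_Spaces.linear sc sc (\<lambda>x. br x y)) \<and>
     (\<forall>x. br x x = 0) \<and>
     (\<forall>x y z. br x (br y z) + br y (br z x) + br z (br x y) = 0)"

definition lie_ideal ::
  "(complex \<Rightarrow> 'g::ab_group_add \<Rightarrow> 'g) \<Rightarrow> ('g \<Rightarrow> 'g \<Rightarrow> 'g) \<Rightarrow> 'g set \<Rightarrow> bool" where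
  "lie_ideal sc br I \<longleftrightarrow> module.subspace sc I \<and> (\<forall>x y. y \<in> I \<longrightarrow> br x y \<in> I)"

definition complex_simple_lie_algebra ::
  "(complex \<Rightarrow> 'g::ab_group_add \<Rightarrow> 'g) \<Rightarrow> ('g \<Rightarrow> 'g \<Rightarrow> 'g) \<Rightarrow> bool" where
  "complex_simple_lie_algebra sc br \<longleftrightarrow>
     complex_lie_algebra sc br \<and>
     (\<exists>B. finite B \<and> module.span sc B = UNIV) \<and>
     (\<exists>x y. br x y \<noteq> 0) \<and>
     (\<forall>I. lie_ideal sc br I \<longrightarrow> I = {0} \<or> I = UNIV)"

definition involutive_automorphism ::
  "(complex \<Rightarrow> 'g::ab_group_add \<Rightarrow> 'g) \<Rightarrow> ('g \<Rightarrow> 'g \<Rightarrow> 'g) \<Rightarrow> ('g \<Rightarrow> 'g) \<Rightarrow> bool" where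
  "involutive_automorphism sc br \<theta> \<longleftrightarrow>
     Vector_Spaces.linear sc sc \<theta> \<and>
     (\<forall>x y. \<theta> (br x y) = br (\<theta> x) (\<theta> y)) \<and>
     (\<forall>x. \<theta> (\<theta> x) = x)"

definition kpart :: "('g::ab_group_add \<Rightarrow> 'g) \<Rightarrow> 'g set" where
  "kpart \<theta> = {x. \<theta> x = x}"

definition mpart :: "('g::ab_group_add \<Rightarrow> 'g) \<Rightarrow> 'g set" where
  "mpart \<theta> = {x. \<theta> x = - x}"

definition mplus ::
  "(complex \<Rightarrow> 'g::ab_group_add \<Rightarrow> 'g) \<Rightarrow> ('g \<Rightarrow> 'g \<Rightarrow> 'g) \<Rightarrow> ('g \<Rightarrow> 'g) \<Rightarrow> 'g \<Rightarrow> 'g set" where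
  "mplus sc br \<theta> U = {X \<in> mpart \<theta>. br U X = sc \<i> X}"

definition mminus ::
  "(complex \<Rightarrow> 'g::ab_group_add \<Rightarrow> 'g) \<Rightarrow> ('g \<Rightarrow> 'g \<Rightarrow> 'g) \<Rightarrow> ('g \<Rightarrow> 'g) \<Rightarrow> 'g \<Rightarrow> 'g set" where
  "mminus sc br \<theta> U = {X \<in> mpart \<theta>. br U X = sc (- \<i>) X}"

definition hermitian_symmetric_data ::
  "(complex \<Rightarrow> 'g::ab_group_add \<Rightarrow> 'g) \<Rightarrow> ('g \<Rightarrow> 'g \<Rightarrow> 'g) \<Rightarrow> ('g \<Rightarrow> 'g) \<Rightarrow> 'g \<Rightarrow> bool" where
  "hermitian_symmetric_data sc br \<theta> U \<longleftrightarrow>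
     complex_simple_lie_algebra sc br \<and>
     involutive_automorphism sc br \<theta> \<and>
     mpart \<theta> \<noteq> {0} \<and>
     U \<in> kpart \<theta> \<and> (\<forall>x \<in> kpart \<theta>. br U x = 0) \<and>
     (\<forall>X \<in> mpart \<theta>. \<exists>Xp \<in> mplus sc br \<theta> U. \<exists>Xm \<in> mminus sc br \<theta> U. X = Xp + Xm)"

definition Jop :: "('g \<Rightarrow> 'g \<Rightarrow> 'g) \<Rightarrow> 'g \<Rightarrow> 'g \<Rightarrow> 'g" where
  "Jop br U Z = br U Z"

definition ad2 :: "('g \<Rightarrow> 'g \<Rightarrow> 'g) \<Rightarrow> 'g \<Rightarrow> 'g \<Rightarrow> 'g" where
  "ad2 br Z X = br Z (br Z X)"

end

theory Submission
  imports Defs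
begin

text \<open>Write \<open>Z = A + B\<close> with \<open>A \<in> \<mm>\<^sup>+\<close> and \<open>B \<in> \<mm>\<^sup>-\<close>. Then \<open>JZ = i(A - B)\<close>, so it
  suffices that \<open>ad\<^sup>2(A - B)\<close> and \<open>ad\<^sup>2(A + B)\<close> commute on \<open>\<mm>\<close>. Grading by the eigenvalues
  of \<open>ad \<Upsilon>\<close> (\<open>\<kk>\<close> in degree 0, \<open>\<mm>\<^sup>\<plusminus>\<close> in degree \<open>\<plusminus>1\<close>, nothing in degree \<open>\<plusminus>2\<close>) kills
  most terms of the expansion; on \<open>X \<in> \<mm>\<^sup>-\<close> what remains is \<open>[A,[[A,B],[A,X]]]\<close>. As \<open>(ad A)\<^sup>3\<close>
  vanishes on \<open>B\<close> and on \<open>X\<close> and \<open>[B,X] = 0\<close>, the Leibniz rule gives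
  \<open>0 = (ad A)\<^sup>3[B,X] = 3[A,[[A,B],[A,X]]]\<close>. The case \<open>X \<in> \<mm>\<^sup>+\<close> is symmetric.\<close>

locale complex_lie =
  fixes sc :: "complex \<Rightarrow> 'g::ab_group_add \<Rightarrow> 'g"
    and br :: "'g \<Rightarrow> 'g \<Rightarrow> 'g"
  assumes complex_lie_algebra: "complex_lie_algebra sc br"
begin

sublocale vs: vector_space sc
  using complex_lie_algebra by (simp add: complex_lie_algebra_def)

lemma module_hom_bracket_right: "module_hom sc sc (br x)"
  using complex_lie_algebra by (simp add: complex_lie_algebra_def linear_iff_module_hom)

lemma module_hom_bracket_left: "module_hom sc sc (\<lambda>x. br x y)"
  using complex_lie_algebra by (simp add: complex_lie_algebra_def linear_iff_module_hom)

lemmas bracket_add_right = module_hom.add[OF module_hom_bracket_right]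
lemmas bracket_add_left = module_hom.add[OF module_hom_bracket_left]
lemmas bracket_diff_right = module_hom.diff[OF module_hom_bracket_right]
lemmas bracket_diff_left = module_hom.diff[OF module_hom_bracket_left]
lemmas bracket_scale_right = module_hom.scale[OF module_hom_bracket_right]
lemmas bracket_scale_left = module_hom.scale[OF module_hom_bracket_left]

lemma bracket_zero_right [simp]: "br x 0 = 0"
  by (rule module_hom.zero[OF module_hom_bracket_right])

lemma bracket_zero_left [simp]: "br 0 y = 0"
  using module_hom.zero[OF module_hom_bracket_left] .

lemma bracket_self: "br x x = 0"
  using complex_lie_algebra by (simp add: complex_lie_algebra_def)

lemma bracket_antisym: "br y x = - br x y"
proof -
  have "0 = br (x + y) (x + y)" by (rule bracket_self[symmetric])
  also have "\<dots> = br x x + br y x + (br x y + br y y)"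
    by (simp only: bracket_add_left bracket_add_right)
  also have "\<dots> = br y x + br x y" by (simp add: bracket_self)
  finally show ?thesis by (metis eq_neg_iff_add_eq_0)
qed

lemma bracket_leibniz: "br a (br b c) = br (br a b) c + br b (br a c)"
proof -
  have "br a (br b c) + br b (br c a) + br c (br a b) = 0"
    using complex_lie_algebra by (simp add: complex_lie_algebra_def)
  moreover have "br b (br c a) = - br b (br a c)"
    using module_hom.neg[OF module_hom_bracket_right] bracket_antisym[of c a] by simp
  moreover have "br c (br a b) = - br (br a b) c"
    by (rule bracket_antisym)
  ultimately show ?thesis
    by (simp add: algebra_simps eq_neg_iff_add_eq_0)
qed

lemma triple_eq_0_imp_eq_0:
  fixes y :: 'g
  assumes "y + y + y = 0"
  shows "y = 0"
proof -
  have "sc 3 y = sc (1 + 1 + 1) y" by simp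
  also have "\<dots> = y + y + y" by (simp only: vs.scale_left_distrib vs.scale_one)
  finally show ?thesis using assms by simp
qed

lemma bracket_bracket_vanishes:
  assumes BX: "br B X = 0"
    and A3B: "br A (br A (br A B)) = 0"
    and A3X: "br A (br A (br A X)) = 0"
  shows "br A (br (br A B) (br A X)) = 0"
proof -
  define H K C V where "H = br A B" and "K = br A X" and "C = br A H" and "V = br A K"
  have HK: "br A (br H K) = br C K + br H V"
    unfolding C_def V_def by (rule bracket_leibniz)
  have CX: "br A (br C X) = br C K"
  proof -
    have "br A C = 0" using A3B by (simp add: C_def H_def)
    then show ?thesis
      using bracket_leibniz[of A C X] bracket_antisym[of A C] by (simp add: K_def)
  qed
  have BV: "br A (br B V) = br H V"
    using bracket_leibniz[of A B V] A3X by (simp add: H_def V_def K_def)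
  have "br A (br H K) + br A (br H K) + br A (br H K)
      = br A (br C X) + br A (br H K) + br A (br H K) + br A (br B V)"
    unfolding CX BV HK by (simp add: algebra_simps)
  also have "\<dots> = br A (br A (br A (br B X)))"
    using bracket_leibniz[of A B X] bracket_leibniz[of A H X] bracket_leibniz[of A B K]
    by (simp add: bracket_add_right add.assoc flip: H_def K_def C_def V_def)
  also have "\<dots> = 0" using BX by simp
  finally have "br A (br H K) = 0" by (rule triple_eq_0_imp_eq_0)
  then show ?thesis by (simp add: H_def K_def)
qed

lemma ad2_sum_diff_commute:
  assumes BX: "br B X = 0"
    and A3B: "br A (br A (br A B)) = 0"
    and A3X: "br A (br A (br A X)) = 0"
    and B2AX: "br B (br B (br A X)) = 0"
  shows "ad2 br (A - B) (ad2 br (A + B) X) = ad2 br (A + B) (ad2 br (A - B) X)"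
proof -
  have "br A (br A (br B (br A X))) = br A (br B (br A (br A X)))"
    using bracket_bracket_vanishes[OF BX A3B A3X] bracket_leibniz[of A B "br A X"]
    by (simp add: bracket_add_right)
  \<comment> \<open>the hypotheses reduce the difference of the two sides to twice the difference above\<close>
  then show ?thesis
    unfolding ad2_def using BX A3X B2AX
    by (simp add: bracket_add_left bracket_add_right bracket_diff_left bracket_diff_right)
qed

lemma module_hom_ad2: "module_hom sc sc (ad2 br W)"
  by unfold_locales (simp_all add: ad2_def bracket_add_right bracket_scale_right)

lemma ad2_uminus: "ad2 br (- W) Y = ad2 br W Y"
  using module_hom.neg[OF module_hom_bracket_left]
  by (simp add: ad2_def module_hom.neg[OF module_hom_bracket_right])

lemma ad2_scale: "ad2 br (sc a W) Y = sc (a * a) (ad2 br W Y)"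
  by (simp add: ad2_def bracket_scale_left bracket_scale_right)

end

locale hermitian_symmetric = complex_lie sc br
  for sc :: "complex \<Rightarrow> 'g::ab_group_add \<Rightarrow> 'g" and br +
  fixes \<theta> :: "'g \<Rightarrow> 'g" and U :: 'g
  assumes involutive_automorphism: "involutive_automorphism sc br \<theta>"
    and central_kpart: "x \<in> kpart \<theta> \<Longrightarrow> br U x = 0"
begin

definition joint_eigenspace :: "complex \<Rightarrow> complex \<Rightarrow> 'g set" where
  "joint_eigenspace c p = {x. br U x = sc c x \<and> \<theta> x = sc p x}"

lemma mplus_eq_joint_eigenspace: "mplus sc br \<theta> U = joint_eigenspace \<i> (-1)"
  by (auto simp: mplus_def mpart_def joint_eigenspace_def)

lemma mminus_eq_joint_eigenspace: "mminus sc br \<theta> U = joint_eigenspace (-\<i>) (-1)"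
  by (auto simp: mminus_def mpart_def joint_eigenspace_def)

lemma bracket_joint_eigenspace:
  assumes "x \<in> joint_eigenspace c p" and "y \<in> joint_eigenspace d q"
  shows "br x y \<in> joint_eigenspace (c + d) (p * q)"
proof -
  have "br U (br x y) = br (sc c x) y + br x (sc d y)"
    using assms bracket_leibniz[of U x y] by (simp add: joint_eigenspace_def)
  also have "\<dots> = sc (c + d) (br x y)"
    by (simp add: bracket_scale_left bracket_scale_right vs.scale_left_distrib)
  finally have "br U (br x y) = sc (c + d) (br x y)" .
  moreover have "\<theta> (br x y) = sc (p * q) (br x y)"
    using assms involutive_automorphism
    by (simp add: joint_eigenspace_def involutive_automorphism_def
        bracket_scale_left bracket_scale_right mult.commute)
  ultimately show ?thesis by (simp add: joint_eigenspace_def)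
qed

lemma joint_eigenspace_trivial:
  assumes "x \<in> joint_eigenspace c 1" and "c \<noteq> 0"
  shows "x = 0"
proof -
  have "br U x = 0" using assms(1) by (intro central_kpart) (simp add: joint_eigenspace_def kpart_def)
  then have "sc c x = 0" using assms(1) by (simp add: joint_eigenspace_def)
  then show ?thesis using assms(2) by simp
qed

lemma ad2_sum_diff_commute_joint_eigenspace:
  assumes A: "A \<in> joint_eigenspace c (-1)" and B: "B \<in> joint_eigenspace (-c) (-1)"
    and X: "X \<in> joint_eigenspace (-c) (-1)" and "c \<noteq> 0"
  shows "ad2 br (A - B) (ad2 br (A + B) X) = ad2 br (A + B) (ad2 br (A - B) X)"
proof (rule ad2_sum_diff_commute)
  note br_eig = bracket_joint_eigenspace
  have "br B X \<in> joint_eigenspace (- c - c) 1"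
    using br_eig[OF B X] by simp
  then show "br B X = 0" by (rule joint_eigenspace_trivial) (simp add: \<open>c \<noteq> 0\<close>)
  have "br A (br A (br A B)) \<in> joint_eigenspace (c + c) 1"
    using br_eig[OF A br_eig[OF A br_eig[OF A B]]] by (simp add: algebra_simps)
  then show "br A (br A (br A B)) = 0" by (rule joint_eigenspace_trivial) (simp add: \<open>c \<noteq> 0\<close>)
  have "br A (br A (br A X)) \<in> joint_eigenspace (c + c) 1"
    using br_eig[OF A br_eig[OF A br_eig[OF A X]]] by (simp add: algebra_simps)
  then show "br A (br A (br A X)) = 0" by (rule joint_eigenspace_trivial) (simp add: \<open>c \<noteq> 0\<close>)
  have "br B (br B (br A X)) \<in> joint_eigenspace (- c - c) 1"
    using br_eig[OF B br_eig[OF B br_eig[OF A X]]] by (simp add: algebra_simps)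
  then show "br B (br B (br A X)) = 0" by (rule joint_eigenspace_trivial) (simp add: \<open>c \<noteq> 0\<close>)
qed

lemma ad2_sum_diff_commute_mpart:
  assumes A: "A \<in> mplus sc br \<theta> U" and B: "B \<in> mminus sc br \<theta> U"
    and Xp: "Xp \<in> mplus sc br \<theta> U" and Xm: "Xm \<in> mminus sc br \<theta> U"
  shows "ad2 br (A - B) (ad2 br (A + B) (Xp + Xm)) = ad2 br (A + B) (ad2 br (A - B) (Xp + Xm))"
proof -
  note eig = mplus_eq_joint_eigenspace mminus_eq_joint_eigenspace
  have "ad2 br (A - B) (ad2 br (A + B) Xm) = ad2 br (A + B) (ad2 br (A - B) Xm)"
    using A B Xm by (intro ad2_sum_diff_commute_joint_eigenspace[where c = \<i>]) (simp_all add: eig)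
  moreover have "ad2 br (B - A) (ad2 br (B + A) Xp) = ad2 br (B + A) (ad2 br (B - A) Xp)"
    using A B Xp by (intro ad2_sum_diff_commute_joint_eigenspace[where c = "-\<i>"]) (simp_all add: eig)
  then have "ad2 br (A - B) (ad2 br (A + B) Xp) = ad2 br (A + B) (ad2 br (A - B) Xp)"
    using ad2_uminus[of "A - B"] by (simp add: add.commute)
  ultimately show ?thesis
    by (simp add: module_hom.add[OF module_hom_ad2])
qed

end

theorem proposition4p2:
  fixes sc :: "complex \<Rightarrow> 'g::ab_group_add \<Rightarrow> 'g"
    and br :: "'g \<Rightarrow> 'g \<Rightarrow> 'g"
    and \<theta> :: "'g \<Rightarrow> 'g"
    and U :: 'g
  assumes "hermitian_symmetric_data sc br \<theta> U"
    and "Z \<in> mpart \<theta>"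
    and "X \<in> mpart \<theta>"
  shows "ad2 br (Jop br U Z) (ad2 br Z X) = ad2 br Z (ad2 br (Jop br U Z) X)"
proof -
  note data = assms(1)[unfolded hermitian_symmetric_data_def complex_simple_lie_algebra_def]
  interpret hermitian_symmetric sc br \<theta> U
    using data by unfold_locales auto
  obtain A B where A: "A \<in> mplus sc br \<theta> U" and B: "B \<in> mminus sc br \<theta> U" and Z: "Z = A + B"
    using data assms(2) by blast
  obtain Xp Xm where Xp: "Xp \<in> mplus sc br \<theta> U" and Xm: "Xm \<in> mminus sc br \<theta> U"
    and X: "X = Xp + Xm"
    using data assms(3) by blast
  have "ad2 br (A - B) (ad2 br Z X) = ad2 br Z (ad2 br (A - B) X)"
    unfolding Z X by (rule ad2_sum_diff_commute_mpart[OF A B Xp Xm])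
  moreover have "Jop br U Z = sc \<i> (A - B)"
    using A B by (simp add: Jop_def Z mplus_def mminus_def bracket_add_right vs.scale_right_diff_distrib)
  ultimately show ?thesis
    by (simp add: ad2_scale module_hom.neg[OF module_hom_ad2])
qed

end
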